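(* Let $n,b$ be integers with $1<n<b$. The $(n,b)$-Hoey-Sloane graph $\Gamma$ is symmetric, i.e. $\Gamma=\overline{\Gamma}$ as edge-labelled graphs.
   Context: Let $\lambda(x)$ denote the least non-negative residue of $x$ modulo $b$. The $(n,b)$-mother graph $M$ is the directed graph on vertex set $\{0,\ldots,b-1\}$ whose edges are the ordered pairs of digits $(d_1,d_2)$ with $\lambda(d_1+(b-n)d_2)\le n-1$. The $(n,b)$-Hoey-Sloane graph $\Gamma$ is the edge-labelled directed graph with vertex set $\{0,\ldots,n-1\}$ in which $(c_1,c_2)$ is an edge precisely when the set $\{(d_1,d_2)\in E(M) \mid n d_2-d_1+c_1=b c_2\}$ is nonempty, this set being its collection of edge labels. For a state $c$ write $\overline{c}=n-1-c$ and for a digit $d$ write $\overline{d}=b-1-d$. For an edge-labelled subgraph $\Gamma_0$ of $\Gamma$, its reflection $\overline{\Gamma}_0$ is the edge-labelled graph whose vertices are the $\overline{c}$ for vertices $c$ of $\Gamma_0$, whose edges are the $(\overline{c}_1,\overline{c}_2)$ for edges $(c_1,c_2)$ of $\Gamma_0$, and in which $(\overline{d}_1,\overline{d}_2)$ is a label of $(\overline{c}_1,\overline{c}_2)$ whenever $(d_1,d_2)$ is a label of $(c_1,c_2)$ in $\Gamma_0$. $\Gamma_0$ is symmetric if $\Gamma_0=\overline{\Gamma}_0$. *)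

theory Defs
  imports Main
begin

definition lam :: "int \<Rightarrow> int \<Rightarrow> int" where
  "lam b x = x mod b"

definition mother_edges :: "int \<Rightarrow> int \<Rightarrow> (int \<times> int) set" where
  "mother_edges n b = {(d1, d2). d1 \<in> {0..b-1} \<and> d2 \<in> {0..b-1} \<and>
                                 lam b (d1 + (b - n) * d2) \<le> n - 1}"

record 'l elgraph =
  verts :: "int set"
  edges :: "(int \<times> int) set"
  labels :: "int \<times> int \<Rightarrow> 'l set"

definition HS_labels :: "int \<Rightarrow> int \<Rightarrow> int \<times> int \<Rightarrow> (int \<times> int) set" where
  "HS_labels n b e = (case e of (c1, c2) \<Rightarrow>
     (if c1 \<in> {0..n-1} \<and> c2 \<in> {0..n-1}
      then {(d1, d2) \<in> mother_edges n b. n * d2 - d1 + c1 = b * c2} else {}))"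

definition hoey_sloane :: "int \<Rightarrow> int \<Rightarrow> (int \<times> int) elgraph" where
  "hoey_sloane n b = \<lparr> verts = {0..n-1},
     edges = {(c1, c2). c1 \<in> {0..n-1} \<and> c2 \<in> {0..n-1} \<and> HS_labels n b (c1, c2) \<noteq> {}},
     labels = HS_labels n b \<rparr>"

definition state_bar :: "int \<Rightarrow> int \<Rightarrow> int" where
  "state_bar n c = n - 1 - c"

definition digit_bar :: "int \<Rightarrow> int \<Rightarrow> int" where
  "digit_bar b d = b - 1 - d"

text \<open>Reflection of an edge-labelled subgraph. Since state_bar is an involution,
  (x,y) is labelled by (bar d1, bar d2) iff (bar x, bar y) is labelled by (d1,d2).\<close>
definition reflect :: "int \<Rightarrow> int \<Rightarrow> (int \<times> int) elgraph \<Rightarrow> (int \<times> int) elgraph" where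
  "reflect n b G = \<lparr> verts = state_bar n ` verts G,
     edges = (\<lambda>(c1, c2). (state_bar n c1, state_bar n c2)) ` edges G,
     labels = (\<lambda>(x, y). (\<lambda>(d1, d2). (digit_bar b d1, digit_bar b d2)) `
                         labels G (state_bar n x, state_bar n y)) \<rparr>"

definition symmetric_graph :: "int \<Rightarrow> int \<Rightarrow> (int \<times> int) elgraph \<Rightarrow> bool" where
  "symmetric_graph n b G \<longleftrightarrow> G = reflect n b G"

end

theory Submission
  imports Defs
begin

text \<open>Since \<open>d\<^sub>1 + (b - n) d\<^sub>2 \<equiv> c\<^sub>1 (mod b)\<close> whenever \<open>n d\<^sub>2 - d\<^sub>1 + c\<^sub>1 = b c\<^sub>2\<close>,
  the mother-graph condition on a label is automatic (as \<open>0 \<le> c\<^sub>1 < n \<le> b\<close>): the labels of \<open>(c\<^sub>1, c\<^sub>2)\<close> are just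
  the digit pairs solving this linear equation. Replacing every state and digit by its bar
  turns the left side minus the right side into its negative, so the equation, and with it
  the whole labelled graph, is invariant under reflection.\<close>

lemma involution_image_eq_vimage:
  assumes "\<And>x. f (f x) = x"
  shows "f ` A = f -` A"
  using assms by (auto intro: image_eqI[where x = "f _"])

lemma state_bar_involution [simp]: "state_bar n (state_bar n c) = c"
  by (simp add: state_bar_def)

lemma digit_bar_involution [simp]: "digit_bar b (digit_bar b d) = d"
  by (simp add: digit_bar_def)

lemma state_bar_mem_iff [simp]: "state_bar n c \<in> {0..n-1} \<longleftrightarrow> c \<in> {0..n-1}"
  by (auto simp: state_bar_def)

lemma digit_bar_mem_iff [simp]: "digit_bar b d \<in> {0..b-1} \<longleftrightarrow> d \<in> {0..b-1}"
  by (auto simp: digit_bar_def)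

lemma mem_HS_labels_iff:
  fixes n b :: int
  assumes "n \<le> b"
  shows "(d1, d2) \<in> HS_labels n b (c1, c2) \<longleftrightarrow>
    c1 \<in> {0..n-1} \<and> c2 \<in> {0..n-1} \<and> d1 \<in> {0..b-1} \<and> d2 \<in> {0..b-1} \<and>
    n * d2 - d1 + c1 = b * c2"
proof -
  have "lam b (d1 + (b - n) * d2) \<le> n - 1"
    if c1: "c1 \<in> {0..n-1}" and eq: "n * d2 - d1 + c1 = b * c2"
  proof -
    have "d1 + (b - n) * d2 = c1 + (d2 - c2) * b"
      using eq by (simp add: algebra_simps)
    then have "lam b (d1 + (b - n) * d2) = c1 mod b"
      by (simp add: lam_def)
    also have "\<dots> = c1"
      using c1 assms by (simp add: mod_pos_pos_trivial)
    finally show ?thesis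
      using c1 by simp
  qed
  then show ?thesis
    unfolding HS_labels_def mother_edges_def by auto
qed

lemma HS_labels_reflect_iff:
  fixes n b :: int
  assumes "n \<le> b"
  shows "(digit_bar b d1, digit_bar b d2) \<in> HS_labels n b (state_bar n c1, state_bar n c2) \<longleftrightarrow>
    (d1, d2) \<in> HS_labels n b (c1, c2)"
proof -
  have "n * digit_bar b d2 - digit_bar b d1 + state_bar n c1 - b * state_bar n c2 =
      - (n * d2 - d1 + c1 - b * c2)"
    by (simp add: digit_bar_def state_bar_def algebra_simps)
  then have "n * digit_bar b d2 - digit_bar b d1 + state_bar n c1 = b * state_bar n c2 \<longleftrightarrow>
      n * d2 - d1 + c1 = b * c2"
    by linarith
  then show ?thesis
    by (simp only: mem_HS_labels_iff[OF assms] state_bar_mem_iff digit_bar_mem_iff)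
qed

lemma HS_labels_reflect:
  fixes n b :: int
  assumes "n \<le> b"
  shows "(\<lambda>(d1, d2). (digit_bar b d1, digit_bar b d2)) ` HS_labels n b (state_bar n c1, state_bar n c2)
    = HS_labels n b (c1, c2)"
  by (subst involution_image_eq_vimage) (auto simp: HS_labels_reflect_iff[OF assms])

lemma HS_labels_reflect_eq_empty_iff:
  fixes n b :: int
  assumes "n \<le> b"
  shows "HS_labels n b (state_bar n c1, state_bar n c2) = {} \<longleftrightarrow> HS_labels n b (c1, c2) = {}"
  by (metis HS_labels_reflect[OF assms] image_is_empty)

lemma hoey_sloane_edges_reflect_iff:
  fixes n b :: int
  assumes "n \<le> b"
  shows "(state_bar n c1, state_bar n c2) \<in> edges (hoey_sloane n b) \<longleftrightarrow>
    (c1, c2) \<in> edges (hoey_sloane n b)"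
  by (simp only: hoey_sloane_def elgraph.select_convs mem_Collect_eq case_prod_conv
      state_bar_mem_iff HS_labels_reflect_eq_empty_iff[OF assms])

theorem corollary12:
  fixes n b :: int
  assumes "1 < n" and "n < b"
  shows "symmetric_graph n b (hoey_sloane n b)"
proof -
  let ?G = "hoey_sloane n b"
  have "n \<le> b"
    using assms by simp
  have verts: "state_bar n ` verts ?G = verts ?G"
    by (subst involution_image_eq_vimage) (auto simp: hoey_sloane_def state_bar_def)
  have edges: "(\<lambda>(c1, c2). (state_bar n c1, state_bar n c2)) ` edges ?G = edges ?G"
    by (subst involution_image_eq_vimage)
      (auto simp: hoey_sloane_edges_reflect_iff[OF \<open>n \<le> b\<close>])
  have labels: "(\<lambda>(c1, c2). (\<lambda>(d1, d2). (digit_bar b d1, digit_bar b d2)) `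
      labels ?G (state_bar n c1, state_bar n c2)) = labels ?G"
    by (auto simp: hoey_sloane_def HS_labels_reflect[OF \<open>n \<le> b\<close>])
  show ?thesis
    unfolding symmetric_graph_def reflect_def
    by (simp only: verts edges labels) (simp add: hoey_sloane_def)
qed

end
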